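(* Let $0<a_0<1\le C_0<\infty$, $\lambda_{univ}=\sqrt{(2/n)\log p}$ and $s=a_0n/\log p$. Suppose that $$\inf_{\delta}\sup_{\beta}\Big\{\|\delta(X,y)-\beta\|_2^2:\ y=X\beta,\ \textstyle\sum_{j=1}^p\min(|\beta_j|/\lambda_{univ},1)\le s+1\Big\}\le 2C_0 s(\log p)/n,$$ where the infimum is over all maps $\delta:(X,y)\mapsto\delta(X,y)\in\mathbb{R}^p$. Then the values $\eta_j^*$ produced by Step 1 of the score-selection algorithm (with default input $\eta_j^*=\sqrt{2\log p}$ and $\kappa_1\in(0,1]$) satisfy $\max_{j\le p}\eta_j^*\le(1+\kappa_1)\sqrt{(4C_0/a_0)\log p}$.
   Context: $X=(x_1,\dots,x_p)\in\mathbb{R}^{n\times p}$ is a deterministic matrix with columns normalized so that $\|x_j\|_2^2=n$ for all $j$; $X_{-j}$ denotes the $n\times(p-1)$ matrix with columns $x_k$, $k\neq j$. For $\lambda>0$ let $\hat\gamma_j(\lambda)\in\arg\min_{b\in\mathbb{R}^{p-1}}\{\|x_j-X_{-j}b\|_2^2/(2n)+\lambda\|b\|_1\}$, $z_j(\lambda)=x_j-X_{-j}\hat\gamma_j(\lambda)$, $\eta_j(\lambda)=\max_{k\neq j}|x_k^Tz_j(\lambda)|/\|z_j(\lambda)\|_2$, $\tau_j(\lambda)=\|z_j(\lambda)\|_2/|x_j^Tz_j(\lambda)|$. Score-selection algorithm (for fixed $j$): Input: an upper bound $\eta_j^*$ (default $\sqrt{2\log p}$), tuning parameters $\kappa_0\in[0,1]$,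 $\kappa_1\in(0,1]$. Step 1: if $\eta_j(\lambda)>\eta_j^*$ for all $\lambda>0$, reset $\eta_j^*\leftarrow(1+\kappa_1)\inf_{\lambda>0}\eta_j(\lambda)$; then set $\lambda\leftarrow\max\{\lambda:\eta_j(\lambda)\le\eta_j^*\}$, $\eta_j^*\leftarrow\eta_j(\lambda)$, $\tau_j^*\leftarrow\tau_j(\lambda)$. Step 2: $\lambda_j\leftarrow\min\{\lambda:\tau_j(\lambda)\le(1+\kappa_0)\tau_j^*\}$. Output: $\lambda_j$, $z_j=z_j(\lambda_j)$, $\tau_j=\tau_j(\lambda_j)$, $\eta_j=\eta_j(\lambda_j)$. *)

theory Defs
  imports "HOL-Analysis.Analysis"
begin

text \<open>Design matrix X is n x p: type real^'p^'n (rows indexed by 'n, columns by 'p).  A vector b in R^{p-1} indexed by k /= j is represented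
  as a vector b :: real^'p with b$j = 0, so that X_{-j} b = X *v b.\<close>

definition lasso_obj :: "real^'p^'n \<Rightarrow> 'p \<Rightarrow> real \<Rightarrow> real^'p \<Rightarrow> real" where
  "lasso_obj X j lam b =
     (norm (column j X - X *v b))\<^sup>2 / (2 * real CARD('n)) + lam * (\<Sum>k\<in>UNIV - {j}. \<bar>b $ k\<bar>)"

definition gamma_hat :: "real^'p^'n \<Rightarrow> 'p \<Rightarrow> real \<Rightarrow> real^'p" where
  "gamma_hat X j lam =
     (SOME b. b $ j = 0 \<and> (\<forall>b'. b' $ j = 0 \<longrightarrow> lasso_obj X j lam b \<le> lasso_obj X j lam b'))"

definition z_score :: "real^'p^'n \<Rightarrow> 'p \<Rightarrow> real \<Rightarrow> real^'n" where
  "z_score X j lam = column j X - X *v gamma_hat X j lam"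

definition eta :: "real^'p^'n \<Rightarrow> 'p \<Rightarrow> real \<Rightarrow> real" where
  "eta X j lam = Max ((\<lambda>k. \<bar>column k X \<bullet> z_score X j lam\<bar> / norm (z_score X j lam)) ` (UNIV - {j}))"

definition step1_threshold :: "real^'p^'n \<Rightarrow> 'p \<Rightarrow> real \<Rightarrow> real" where
  "step1_threshold X j kappa1 =
     (let e0 = sqrt (2 * ln (real CARD('p))) in
      if (\<forall>lam>0. eta X j lam > e0)
      then (1 + kappa1) * (INF lam\<in>{0<..}. eta X j lam)
      else e0)"

definition step1_eta_star :: "real^'p^'n \<Rightarrow> 'p \<Rightarrow> real \<Rightarrow> real \<Rightarrow> bool" where
  "step1_eta_star X j kappa1 e \<longleftrightarrow>
     (\<exists>lam. lam > 0 \<and> eta X j lam \<le> step1_threshold X j kappa1 \<and>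
        (\<forall>mu>0. eta X j mu \<le> step1_threshold X j kappa1 \<longrightarrow> mu \<le> lam) \<and>
        e = eta X j lam)"

end

theory Submission
  imports Defs
begin

text \<open>
  Put T = sqrt((4 C0/a0) log p).  It suffices to find one lam > 0 with
  eta_j(lam) <= T: then the (possibly reset) Step-1 threshold is at most (1 + kappa1) T,
  and the selected eta_j^* never exceeds the threshold.  Suppose instead eta_j(lam) > T
  for every lam.  The Lasso optimality (KKT) conditions turn this into the bounds
  norm z_j(lam) < n lam / T and ||gamma_j(lam)||_1 <= norm(x_j) / T; letting lam -> 0
  (by a compactness argument) gives an exact representation x_j = X_{-j} g with
  ||g||_1 <= sqrt n / T.  Then c e_j and c g (suitably scaled) are two parameters in the
  capped-l1 class with the same noiseless observation X beta, so by the two-point argument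
  every estimator has worst-case squared error at least c^2/4, which exceeds the assumed
  minimax bound 2 C0 s log p / n.
\<close>

text \<open>A quantity t u + t^2 c that is nonnegative for all small t > 0 has u >= 0:
  the abstract form of "the directional derivative at a minimiser is nonnegative".\<close>

lemma nonneg_of_first_order:
  fixes u c :: real
  assumes "\<And>t. 0 < t \<Longrightarrow> t \<le> 1 \<Longrightarrow> 0 \<le> t * u + t\<^sup>2 * c"
  shows "0 \<le> u"
proof -
  have "- u \<le> 0 + e" if e: "0 < e" for e
  proof -
    define t where "t = min 1 (e / (\<bar>c\<bar> + 1))"
    have t: "0 < t" "t \<le> 1" using e by (auto simp: t_def)
    have "0 \<le> t * (u + t * c)" using assms[OF t] by (simp add: algebra_simps power2_eq_square)
    hence "- u \<le> t * c" using t by (simp add: zero_le_mult_iff)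
    also have "\<dots> \<le> t * (\<bar>c\<bar> + 1)" using t by (intro mult_left_mono) auto
    also have "\<dots> \<le> e"
      using min.cobounded2[of 1 "e / (\<bar>c\<bar> + 1)"] by (simp add: t_def le_divide_eq)
    finally show ?thesis by simp
  qed
  thus ?thesis using field_le_epsilon[of "- u" 0] by simp
qed

lemma norm_diff_scaleR_sq:
  fixes z w :: "'a::real_inner"
  shows "(norm (z - t *\<^sub>R w))\<^sup>2 = (norm z)\<^sup>2 - 2 * t * (z \<bullet> w) + t\<^sup>2 * (norm w)\<^sup>2"
  unfolding power2_norm_eq_inner
  by (simp add: inner_diff_left inner_diff_right inner_commute algebra_simps power2_eq_square)

definition l1_off :: "'p \<Rightarrow> real^'p \<Rightarrow> real" where
  "l1_off j b = (\<Sum>k\<in>UNIV - {j}. \<bar>b $ k\<bar>)"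

definition lasso_solution :: "real^'p^'n \<Rightarrow> 'p \<Rightarrow> real \<Rightarrow> real^'p \<Rightarrow> bool" where
  "lasso_solution X j lam g \<longleftrightarrow>
     g $ j = 0 \<and> (\<forall>b. b $ j = 0 \<longrightarrow> lasso_obj X j lam g \<le> lasso_obj X j lam b)"

lemma lasso_obj_eq:
  fixes X :: "real^'p^'n"
  shows "lasso_obj X j lam b =
     (norm (column j X - X *v b))\<^sup>2 / (2 * real CARD('n)) + lam * l1_off j b"
  unfolding lasso_obj_def l1_off_def ..

lemma compact_l1_ball:
  fixes j :: "'p::finite"
  shows "compact {b::real^'p. b $ j = 0 \<and> l1_off j b \<le> R}"
  unfolding compact_eq_bounded_closed
proof
  show "bounded {b::real^'p. b $ j = 0 \<and> l1_off j b \<le> R}"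
  proof (rule boundedI)
    fix b :: "real^'p" assume "b \<in> {b. b $ j = 0 \<and> l1_off j b \<le> R}"
    hence "b $ j = 0" "l1_off j b \<le> R" by auto
    moreover have "(\<Sum>k\<in>UNIV. \<bar>b $ k\<bar>) = \<bar>b $ j\<bar> + l1_off j b"
      unfolding l1_off_def by (simp add: sum.remove[of UNIV j])
    ultimately show "norm b \<le> R" using norm_le_l1_cart[of b] by simp
  qed
  show "closed {b::real^'p. b $ j = 0 \<and> l1_off j b \<le> R}"
    unfolding l1_off_def
    by (intro closed_Collect_conj closed_Collect_eq closed_Collect_le continuous_intros)
qed

text \<open>The nodewise Lasso has a minimiser: it suffices to minimise over the l1-ball
  on which the penalty alone does not exceed the objective at 0.\<close>
lemma lasso_solution_exists:
  fixes X :: "real^'p^'n" and j :: 'p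
  assumes lam: "lam > 0"
  shows "\<exists>g. lasso_solution X j lam g"
proof -
  define R where "R = lasso_obj X j lam 0 / lam"
  define K where "K = {b::real^'p. b $ j = 0 \<and> l1_off j b \<le> R}"
  have "R \<ge> 0" unfolding R_def lasso_obj_def using lam by simp
  hence "0 \<in> K" unfolding K_def l1_off_def by simp
  moreover have "continuous_on K (lasso_obj X j lam)"
    unfolding lasso_obj_def by (intro continuous_intros) auto
  ultimately obtain g where gK: "g \<in> K" and gmin: "\<forall>b\<in>K. lasso_obj X j lam g \<le> lasso_obj X j lam b"
    using continuous_attains_inf[of K "lasso_obj X j lam"] compact_l1_ball unfolding K_def by blast
  have "lasso_obj X j lam g \<le> lasso_obj X j lam b" if bj: "b $ j = 0" for b
  proof (cases "b \<in> K")
    case False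
    hence "lam * R < lam * l1_off j b" using bj lam unfolding K_def by simp
    hence "lasso_obj X j lam 0 \<le> lam * l1_off j b" unfolding R_def using lam by simp
    also have "\<dots> \<le> lasso_obj X j lam b" unfolding lasso_obj_eq by simp
    finally have "lasso_obj X j lam 0 \<le> lasso_obj X j lam b" .
    with gmin \<open>0 \<in> K\<close> show ?thesis by fastforce
  qed (use gmin in auto)
  with gK show ?thesis unfolding lasso_solution_def K_def by blast
qed

lemma gamma_hat_solution:
  "lam > 0 \<Longrightarrow> lasso_solution X j lam (gamma_hat X j lam)"
  using someI_ex[OF lasso_solution_exists]
  unfolding gamma_hat_def lasso_solution_def by blast

lemma lasso_directional_optimality:
  fixes X :: "real^'p^'n"
  assumes sol: "lasso_solution X j lam g" and lam: "lam \<ge> 0" and vj: "v $ j = 0"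
    and pen: "\<And>t. 0 < t \<Longrightarrow> t \<le> 1 \<Longrightarrow> l1_off j (g + t *\<^sub>R v) \<le> l1_off j g + t * \<delta>"
  shows "(column j X - X *v g) \<bullet> (X *v v) \<le> real CARD('n) * lam * \<delta>"
proof -
  define N where "N = real CARD('n)"
  define z where "z = column j X - X *v g"
  define w where "w = X *v v"
  have N: "N > 0" unfolding N_def by simp
  have "0 \<le> t * (2 * N * lam * \<delta> - 2 * (z \<bullet> w)) + t\<^sup>2 * (norm w)\<^sup>2"
    if t: "0 < t" "t \<le> 1" for t
  proof -
    have res: "column j X - X *v (g + t *\<^sub>R v) = z - t *\<^sub>R w"
      unfolding z_def w_def by (simp add: matrix_vector_right_distrib matrix_vector_mult_scaleR)
    have "lasso_obj X j lam g \<le> lasso_obj X j lam (g + t *\<^sub>R v)"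
      using sol vj unfolding lasso_solution_def by simp
    also have "\<dots> \<le> ((norm z)\<^sup>2 - 2 * t * (z \<bullet> w) + t\<^sup>2 * (norm w)\<^sup>2) / (2 * N)
                    + lam * (l1_off j g + t * \<delta>)"
      unfolding lasso_obj_eq res norm_diff_scaleR_sq N_def[symmetric]
      using pen[OF t] lam by (intro add_left_mono mult_left_mono) auto
    finally have "(norm z)\<^sup>2 / (2 * N) + lam * l1_off j g \<le>
        ((norm z)\<^sup>2 - 2 * t * (z \<bullet> w) + t\<^sup>2 * (norm w)\<^sup>2) / (2 * N) + lam * (l1_off j g + t * \<delta>)"
      unfolding lasso_obj_eq z_def N_def .
    moreover have "((norm z)\<^sup>2 - 2 * t * (z \<bullet> w) + t\<^sup>2 * (norm w)\<^sup>2) / (2 * N)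
        + lam * (l1_off j g + t * \<delta>) - ((norm z)\<^sup>2 / (2 * N) + lam * l1_off j g)
      = (t * (2 * N * lam * \<delta> - 2 * (z \<bullet> w)) + t\<^sup>2 * (norm w)\<^sup>2) / (2 * N)"
      using N by (simp add: field_simps)
    ultimately have "0 \<le> (t * (2 * N * lam * \<delta> - 2 * (z \<bullet> w)) + t\<^sup>2 * (norm w)\<^sup>2) / (2 * N)"
      by linarith
    thus ?thesis using N by (simp add: zero_le_divide_iff)
  qed
  hence "0 \<le> 2 * N * lam * \<delta> - 2 * (z \<bullet> w)" by (rule nonneg_of_first_order)
  thus ?thesis unfolding z_def w_def N_def by simp
qed

lemma l1_off_add_axis:
  "l1_off j (g + c *\<^sub>R axis k 1) \<le> l1_off j g + \<bar>c\<bar>"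
proof -
  have "l1_off j (g + c *\<^sub>R axis k 1) \<le> (\<Sum>i\<in>UNIV-{j}. \<bar>g $ i\<bar> + (if i = k then \<bar>c\<bar> else 0))"
    unfolding l1_off_def by (intro sum_mono) (auto simp: axis_def)
  also have "\<dots> \<le> l1_off j g + \<bar>c\<bar>"
    unfolding l1_off_def by (simp add: sum.distrib sum.delta)
  finally show ?thesis .
qed

lemma lasso_kkt_correlation:
  fixes X :: "real^'p^'n"
  assumes sol: "lasso_solution X j lam g" and lam: "lam \<ge> 0" and kj: "k \<noteq> j"
  shows "\<bar>column k X \<bullet> (column j X - X *v g)\<bar> \<le> real CARD('n) * lam"
proof -
  define a where "a = column k X \<bullet> (column j X - X *v g)"
  define v where "v = sgn a *\<^sub>R axis k (1::real)"
  have "(column j X - X *v g) \<bullet> (X *v v) = sgn a * a"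
    unfolding v_def a_def
    by (simp add: matrix_vector_mult_scaleR matrix_vector_mult_basis inner_commute)
  also have "\<dots> = \<bar>a\<bar>" by (cases a "0::real" rule: linorder_cases) auto
  finally have dir: "(column j X - X *v g) \<bullet> (X *v v) = \<bar>a\<bar>" .
  have pen: "l1_off j (g + t *\<^sub>R v) \<le> l1_off j g + t * 1" if "0 < t" for t
  proof -
    have "l1_off j (g + t *\<^sub>R v) \<le> l1_off j g + \<bar>t * sgn a\<bar>"
      using l1_off_add_axis[of j g "t * sgn a" k] unfolding v_def by simp
    also have "\<bar>t * sgn a\<bar> \<le> t * 1"
      using that by (simp add: abs_mult abs_sgn_eq)
    finally show ?thesis by simp
  qed
  have "v $ j = 0" unfolding v_def using kj by (simp add: axis_def)
  from lasso_directional_optimality[OF sol lam this pen] show ?thesis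
    unfolding dir a_def by simp
qed

lemma lasso_kkt_penalty:
  fixes X :: "real^'p^'n"
  assumes sol: "lasso_solution X j lam g" and lam: "lam \<ge> 0"
  shows "real CARD('n) * lam * l1_off j g \<le> (column j X - X *v g) \<bullet> (X *v g)"
proof -
  have pen: "l1_off j (g + t *\<^sub>R (- g)) \<le> l1_off j g + t * (- l1_off j g)"
    if "0 < t" "t \<le> 1" for t
  proof -
    have "g + t *\<^sub>R (- g) = (1 - t) *\<^sub>R g" by (simp add: algebra_simps)
    moreover have "l1_off j ((1 - t) *\<^sub>R g) = (1 - t) * l1_off j g"
      unfolding l1_off_def using that(2) by (simp add: abs_mult sum_distrib_left)
    ultimately show ?thesis by (simp add: algebra_simps)
  qed
  have "(- g) $ j = 0" using sol unfolding lasso_solution_def by simp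
  moreover have "X *v (- g) = - (X *v g)"
    using matrix_vector_mult_diff_distrib[of X 0 g] by simp
  ultimately show ?thesis using lasso_directional_optimality[OF sol lam _ pen] by simp
qed

text \<open>If eta_j(lam) > T, the residual is small (from the sup-norm KKT condition and the
  definition of eta) and so is the coefficient vector (from the second KKT condition and
  Cauchy-Schwarz: n lam ||g||_1 <= z^T x_j <= norm z norm x_j).\<close>
lemma lasso_fit_of_large_eta:
  fixes X :: "real^'p^'n" and j :: 'p
  assumes p2: "CARD('p) \<ge> 2" and lam: "lam > 0" and T: "T > 0" and large: "eta X j lam > T"
  shows "norm (z_score X j lam) < real CARD('n) * lam / T"
    and "l1_off j (gamma_hat X j lam) \<le> norm (column j X) / T"
proof -
  define N where "N = real CARD('n)"
  define g where "g = gamma_hat X j lam"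
  define z where "z = z_score X j lam"
  have sol: "lasso_solution X j lam g" unfolding g_def using lam by (rule gamma_hat_solution)
  have z: "z = column j X - X *v g" unfolding z_def g_def z_score_def ..
  have "UNIV - {j} \<noteq> {}"
  proof
    assume "UNIV - {j} = {}"
    hence "CARD('p) = card {j}" by (metis Diff_eq_empty_iff subset_singletonD UNIV_not_empty)
    with p2 show False by simp
  qed
  hence eta_le: "eta X j lam \<le> b" if "\<And>k. k \<noteq> j \<Longrightarrow> \<bar>column k X \<bullet> z\<bar> / norm z \<le> b" for b
    using that unfolding eta_def z_def[symmetric] by (subst Max_le_iff) auto
  have "z \<noteq> 0"
  proof
    assume "z = 0"
    hence "eta X j lam \<le> 0" by (intro eta_le) simp
    with large T show False by simp
  qed
  hence nz: "norm z > 0" by simp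
  have "eta X j lam \<le> N * lam / norm z"
  proof (rule eta_le)
    fix k assume "k \<noteq> j"
    hence "\<bar>column k X \<bullet> z\<bar> \<le> N * lam"
      using lasso_kkt_correlation[OF sol _ \<open>k \<noteq> j\<close>] lam unfolding z N_def by simp
    thus "\<bar>column k X \<bullet> z\<bar> / norm z \<le> N * lam / norm z" using nz by (simp add: divide_right_mono)
  qed
  with large have "T < N * lam / norm z" by simp
  hence z_small: "norm z < N * lam / T" using nz T by (simp add: field_simps)
  thus "norm (z_score X j lam) < real CARD('n) * lam / T" unfolding z_def N_def .
  have "N * lam * l1_off j g \<le> z \<bullet> (X *v g)"
    using lasso_kkt_penalty[OF sol] lam unfolding z N_def by simp
  also have "\<dots> = z \<bullet> column j X - z \<bullet> z" unfolding z by (simp add: inner_diff_right)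
  also have "\<dots> \<le> norm z * norm (column j X)" using norm_cauchy_schwarz[of z "column j X"] inner_ge_zero[of z] by linarith
  also have "\<dots> \<le> (N * lam / T) * norm (column j X)"
    using z_small by (intro mult_right_mono) auto
  finally show "l1_off j (gamma_hat X j lam) \<le> norm (column j X) / T"
    unfolding g_def using lam T by (simp add: N_def field_simps)
qed

text \<open>If eta_j stays above T at every penalty level, then x_j is exactly reproduced by
  the other columns with an l1-small coefficient vector: minimise the residual over the
  compact l1-ball of radius norm(x_j)/T; a positive minimal residual m would be beaten by
  the Lasso fit at level lam = m T / (2n).\<close>
lemma exact_representation_of_large_eta:
  fixes X :: "real^'p^'n" and j :: 'p
  assumes p2: "CARD('p) \<ge> 2" and T: "T > 0" and large: "\<forall>lam>0. eta X j lam > T"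
  shows "\<exists>g. g $ j = 0 \<and> l1_off j g \<le> norm (column j X) / T \<and> X *v g = column j X"
proof -
  define N where "N = real CARD('n)"
  define K where "K = {b::real^'p. b $ j = 0 \<and> l1_off j b \<le> norm (column j X) / T}"
  have "0 \<in> K" unfolding K_def l1_off_def using T by simp
  moreover have "continuous_on K (\<lambda>g. norm (column j X - X *v g))"
    by (intro continuous_intros)
  ultimately obtain g where gK: "g \<in> K"
    and gmin: "\<forall>b\<in>K. norm (column j X - X *v g) \<le> norm (column j X - X *v b)"
    using continuous_attains_inf[of K] compact_l1_ball unfolding K_def by blast
  define m where "m = norm (column j X - X *v g)"
  have "m = 0"
  proof (rule ccontr)
    assume "m \<noteq> 0"
    hence m: "m > 0" unfolding m_def by simp
    define lam where "lam = m * T / (2 * N)"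
    have lam: "lam > 0" unfolding lam_def N_def using m T by simp
    define h where "h = gamma_hat X j lam"
    have "h \<in> K"
      using gamma_hat_solution[OF lam, of X j] lasso_fit_of_large_eta(2)[OF p2 lam T, of X j] large lam
      unfolding K_def h_def lasso_solution_def by simp
    hence "m \<le> norm (z_score X j lam)" using gmin unfolding m_def z_score_def h_def by simp
    also have "\<dots> < N * lam / T" using lasso_fit_of_large_eta(1)[OF p2 lam T, of X j] large lam
      unfolding N_def by simp
    also have "\<dots> = m / 2" unfolding lam_def N_def using T by simp
    finally show False using m by simp
  qed
  thus ?thesis using gK unfolding m_def K_def by auto
qed

lemma two_point_distance:
  fixes b1 b2 d :: "'a::real_normed_vector"
  shows "(norm (b1 - b2))\<^sup>2 / 4 \<le> max ((norm (d - b1))\<^sup>2) ((norm (d - b2))\<^sup>2)"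
proof -
  define M where "M = max (norm (d - b1)) (norm (d - b2))"
  have "norm (b1 - b2) \<le> norm (d - b1) + norm (d - b2)"
    using norm_triangle_ineq4[of "d - b2" "d - b1"] by (simp add: norm_minus_commute)
  hence "norm (b1 - b2) / 2 \<le> M" unfolding M_def by linarith
  hence "(norm (b1 - b2) / 2)\<^sup>2 \<le> M\<^sup>2" by (intro power_mono) auto
  also have "M\<^sup>2 = max ((norm (d - b1))\<^sup>2) ((norm (d - b2))\<^sup>2)"
    unfolding M_def by (auto simp: max_def power_mono)
  finally show ?thesis by (simp add: power_divide)
qed

lemma two_point_lower_bound:
  fixes obs :: "'b::real_normed_vector \<Rightarrow> 'y" and est :: "'e \<Rightarrow> 'y \<Rightarrow> 'b"
  assumes b1: "b1 \<in> S" and b2: "b2 \<in> S" and same_obs: "obs b1 = obs b2"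
  shows "ereal ((norm (b1 - b2))\<^sup>2 / 4)
           \<le> (INF e. SUP beta\<in>S. ereal ((norm (est e (obs beta) - beta))\<^sup>2))"
proof (rule INF_greatest)
  fix e
  define d where "d = est e (obs b1)"
  have "ereal ((norm (d - b1))\<^sup>2) \<le> (SUP beta\<in>S. ereal ((norm (est e (obs beta) - beta))\<^sup>2))"
   and "ereal ((norm (d - b2))\<^sup>2) \<le> (SUP beta\<in>S. ereal ((norm (est e (obs beta) - beta))\<^sup>2))"
    unfolding d_def using b1 b2 same_obs by (auto intro: SUP_upper2)
  moreover have "ereal ((norm (b1 - b2))\<^sup>2 / 4) \<le> ereal ((norm (d - b1))\<^sup>2) \<or>
                 ereal ((norm (b1 - b2))\<^sup>2 / 4) \<le> ereal ((norm (d - b2))\<^sup>2)"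
    using two_point_distance[of b1 b2 d] by (simp only: ereal_less_eq le_max_iff_disj)
  ultimately show "ereal ((norm (b1 - b2))\<^sup>2 / 4) \<le> (SUP beta\<in>S. ereal ((norm (est e (obs beta) - beta))\<^sup>2))"
    by (meson order_trans)
qed

text \<open>An exact representation x_j = X g (g_j = 0) yields the two indistinguishable
  parameters c e_j and c g in the capped-l1 class, so the minimax risk is at least c^2/4.\<close>
lemma minimax_lower_bound_of_representation:
  fixes X :: "real^'p^'n"
  assumes g: "g $ j = 0" "X *v g = column j X" and lu: "lu > 0" and s: "s \<ge> 0" and c: "c \<ge> 0"
    and small: "c * l1_off j g \<le> (s + 1) * lu"
  shows "ereal (c\<^sup>2 / 4) \<le> (INF delta :: real^'p^'n \<Rightarrow> real^'n \<Rightarrow> real^'p.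
            SUP beta \<in> {beta. (\<Sum>i\<in>UNIV. min (\<bar>beta $ i\<bar> / lu) 1) \<le> s + 1}.
              ereal ((norm (delta X (X *v beta) - beta))\<^sup>2))"
proof -
  define S where "S = {beta :: real^'p. (\<Sum>i\<in>UNIV. min (\<bar>beta $ i\<bar> / lu) 1) \<le> s + 1}"
  define b1 where "b1 = c *\<^sub>R axis j (1::real)"
  define b2 where "b2 = c *\<^sub>R g"
  have "(\<Sum>i\<in>UNIV. min (\<bar>b1 $ i\<bar> / lu) 1) \<le> (\<Sum>i\<in>UNIV. if i = j then 1 else 0)"
    by (intro sum_mono) (auto simp: b1_def axis_def)
  hence b1S: "b1 \<in> S" unfolding S_def using s by simp
  have "(\<Sum>i\<in>UNIV. min (\<bar>b2 $ i\<bar> / lu) 1) \<le> (\<Sum>i\<in>UNIV. c / lu * \<bar>g $ i\<bar>)"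
    using c by (intro sum_mono) (auto simp: b2_def abs_mult intro: min.coboundedI1)
  also have "\<dots> = c / lu * l1_off j g"
    using g(1) unfolding l1_off_def by (simp add: sum_distrib_left sum.remove[of UNIV j])
  also have "\<dots> \<le> s + 1" using small lu by (simp add: field_simps)
  finally have b2S: "b2 \<in> S" unfolding S_def by simp
  have "X *v b1 = X *v b2"
    unfolding b1_def b2_def by (simp add: matrix_vector_mult_scaleR matrix_vector_mult_basis g(2))
  from two_point_lower_bound[OF b1S b2S, of "(*v) X" "\<lambda>delta. delta X", OF this]
  have "ereal ((norm (b1 - b2))\<^sup>2 / 4) \<le> (INF delta :: real^'p^'n \<Rightarrow> real^'n \<Rightarrow> real^'p.
            SUP beta \<in> S. ereal ((norm (delta X (X *v beta) - beta))\<^sup>2))" .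
  moreover have "c \<le> norm (b1 - b2)"
    using component_le_norm_cart[of "b1 - b2" j] c g(1) unfolding b1_def b2_def by simp
  hence "c\<^sup>2 / 4 \<le> (norm (b1 - b2))\<^sup>2 / 4" using c by (simp add: power_mono)
  ultimately show ?thesis unfolding S_def by (meson ereal_less_eq(3) order_trans)
qed

lemma eta_small_somewhere:
  fixes X :: "real^'p^'n" and j :: 'p
  assumes p2: "CARD('p) \<ge> 2" and T: "T > 0" and lu: "lu > 0" and s: "s \<ge> 0"
    and xj: "column j X \<noteq> 0"
    and risk: "(INF delta :: real^'p^'n \<Rightarrow> real^'n \<Rightarrow> real^'p.
            SUP beta \<in> {beta. (\<Sum>i\<in>UNIV. min (\<bar>beta $ i\<bar> / lu) 1) \<le> s + 1}.
              ereal ((norm (delta X (X *v beta) - beta))\<^sup>2)) \<le> ereal B"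
    and gap: "B < ((s + 1) * lu * T / norm (column j X))\<^sup>2 / 4"
  shows "\<exists>lam>0. eta X j lam \<le> T"
proof (rule ccontr)
  assume "\<not> ?thesis"
  hence "\<forall>lam>0. eta X j lam > T" by auto
  then obtain g where g: "g $ j = 0" "l1_off j g \<le> norm (column j X) / T" "X *v g = column j X"
    using exact_representation_of_large_eta[OF p2 T] by blast
  define c where "c = (s + 1) * lu * T / norm (column j X)"
  have c: "c \<ge> 0" unfolding c_def using s lu T by simp
  have "c * l1_off j g \<le> c * (norm (column j X) / T)" using g(2) c by (rule mult_left_mono)
  also have "\<dots> = (s + 1) * lu" unfolding c_def using xj T by simp
  finally have "ereal (c\<^sup>2 / 4) \<le> ereal B"
    using minimax_lower_bound_of_representation[OF g(1,3) lu s c] risk by (meson order_trans)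
  with gap show False unfolding c_def by simp
qed

lemma step1_threshold_le:
  fixes X :: "real^'p^'n"
  assumes k1: "kappa1 \<ge> 0" and default_le: "sqrt (2 * ln (real CARD('p))) \<le> T"
    and lam: "lam > 0" and eta_le: "eta X j lam \<le> T"
  shows "step1_threshold X j kappa1 \<le> (1 + kappa1) * T"
proof (cases "\<forall>mu>0. eta X j mu > sqrt (2 * ln (real CARD('p)))")
  case True
  hence thr: "step1_threshold X j kappa1 = (1 + kappa1) * (INF mu\<in>{0<..}. eta X j mu)"
    unfolding step1_threshold_def Let_def by simp
  have "bdd_below (eta X j ` {0<..})"
    using True by (intro bdd_belowI2[of _ "sqrt (2 * ln (real CARD('p)))"]) (simp add: less_imp_le)
  hence "(INF mu\<in>{0<..}. eta X j mu) \<le> eta X j lam" using lam by (simp add: cINF_lower)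
  with eta_le have "(INF mu\<in>{0<..}. eta X j mu) \<le> T" by simp
  thus ?thesis unfolding thr using k1 by (simp add: mult_left_mono)
next
  case False
  hence thr: "step1_threshold X j kappa1 = sqrt (2 * ln (real CARD('p)))"
    unfolding step1_threshold_def Let_def by auto
  have "0 \<le> sqrt (2 * ln (real CARD('p)))" by simp
  hence "0 \<le> T" using default_le by linarith
  hence "T \<le> (1 + kappa1) * T" using k1 by (simp add: algebra_simps)
  with default_le show ?thesis unfolding thr by simp
qed

text \<open>Arithmetic at the universal penalty level: with s = a0 n / log p the two-point
  bound exceeds the assumed risk 2 C0 s log p / n by the factor ((s+1)/s)^2.\<close>
lemma universal_level_gap:
  fixes N L a0 C0 :: real
  assumes N: "N > 0" and L: "L > 0" and a0: "a0 > 0" and C0: "C0 > 0"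
  defines "s \<equiv> a0 * N / L" and "lu \<equiv> sqrt ((2 / N) * L)" and "T \<equiv> sqrt ((4 * C0 / a0) * L)"
  shows "2 * C0 * s * L / N < ((s + 1) * lu * T / sqrt N)\<^sup>2 / 4"
proof -
  have s: "s > 0" unfolding s_def using N L a0 by simp
  have risk: "2 * C0 * s * L / N = 2 * C0 * a0" unfolding s_def using N L by simp
  have "lu\<^sup>2 = (2 / N) * L" unfolding lu_def using N L by simp
  also have "\<dots> = 2 * a0 / s" unfolding s_def using N L a0 by (simp add: field_simps)
  finally have lu2: "lu\<^sup>2 = 2 * a0 / s" .
  have "T\<^sup>2 = (4 * C0 / a0) * L" unfolding T_def using a0 C0 L by simp
  also have "\<dots> = 4 * C0 * N / s" unfolding s_def using N L a0 by (simp add: field_simps)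
  finally have T2: "T\<^sup>2 = 4 * C0 * N / s" .
  have "((s + 1) * lu * T / sqrt N)\<^sup>2 / 4 = (s + 1)\<^sup>2 * lu\<^sup>2 * T\<^sup>2 / (4 * N)"
    using N by (simp add: power_mult_distrib power_divide)
  also have "\<dots> = 2 * C0 * a0 * ((s + 1)\<^sup>2 / s\<^sup>2)"
    unfolding lu2 T2 using N s by (simp add: field_simps power2_eq_square)
  finally have bound: "((s + 1) * lu * T / sqrt N)\<^sup>2 / 4 = 2 * C0 * a0 * ((s + 1)\<^sup>2 / s\<^sup>2)" .
  have "s\<^sup>2 < (s + 1)\<^sup>2" using s by (simp add: power_strict_mono)
  hence "1 < (s + 1)\<^sup>2 / s\<^sup>2" using s by simp
  hence "2 * C0 * a0 * 1 < 2 * C0 * a0 * ((s + 1)\<^sup>2 / s\<^sup>2)"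
    using C0 a0 by (intro mult_strict_left_mono) auto
  thus ?thesis unfolding risk bound by simp
qed

theorem proposition1:
  fixes X :: "real^'p^'n" and a0 C0 kappa1 :: real
  assumes p2: "CARD('p) \<ge> 2"
    and norm_cols: "\<forall>j. (norm (column j X))\<^sup>2 = real CARD('n)"
    and a0: "0 < a0" "a0 < 1" and C0: "1 \<le> C0"
    and k1: "0 < kappa1" "kappa1 \<le> 1"
    and minimax:
      "(let lam_univ = sqrt ((2 / real CARD('n)) * ln (real CARD('p)));
            s = a0 * real CARD('n) / ln (real CARD('p))
        in (INF delta :: real^'p^'n \<Rightarrow> real^'n \<Rightarrow> real^'p.
              SUP beta \<in> {beta :: real^'p. (\<Sum>j\<in>UNIV. min (\<bar>beta $ j\<bar> / lam_univ) 1) \<le> s + 1}.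
                ereal ((norm (delta X (X *v beta) - beta))\<^sup>2))
           \<le> ereal (2 * C0 * s * ln (real CARD('p)) / real CARD('n)))"
  shows "\<forall>j e. step1_eta_star X j kappa1 e \<longrightarrow>
           e \<le> (1 + kappa1) * sqrt ((4 * C0 / a0) * ln (real CARD('p)))"
proof (intro allI impI)
  fix j e assume star: "step1_eta_star X j kappa1 e"
  define N where "N = real CARD('n)"
  define L where "L = ln (real CARD('p))"
  define s where "s = a0 * N / L"
  define lu where "lu = sqrt ((2 / N) * L)"
  define T where "T = sqrt ((4 * C0 / a0) * L)"
  have N: "N > 0" unfolding N_def by simp
  have L: "L > 0" unfolding L_def using p2 by simp
  have xj: "norm (column j X) = sqrt N" using norm_cols unfolding N_def by (metis norm_ge_zero real_sqrt_unique)
  have risk: "(INF delta :: real^'p^'n \<Rightarrow> real^'n \<Rightarrow> real^'p.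
            SUP beta \<in> {beta. (\<Sum>i\<in>UNIV. min (\<bar>beta $ i\<bar> / lu) 1) \<le> s + 1}.
              ereal ((norm (delta X (X *v beta) - beta))\<^sup>2)) \<le> ereal (2 * C0 * s * L / N)"
    using minimax unfolding Let_def N_def L_def s_def lu_def .
  have gap: "2 * C0 * s * L / N < ((s + 1) * lu * T / norm (column j X))\<^sup>2 / 4"
    unfolding xj s_def lu_def T_def using universal_level_gap[OF N L a0(1)] C0 by simp
  have "s \<ge> 0" "lu > 0" "T > 0" "column j X \<noteq> 0"
    unfolding s_def lu_def T_def using N L a0 C0 xj by auto
  then obtain lam where lam: "lam > 0" "eta X j lam \<le> T"
    using eta_small_somewhere[OF p2 _ _ _ _ risk gap] by blast
  txt \<open>The default threshold sqrt(2 log p) lies below T because a0 < 1 \<le> C0.\<close>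
  have "sqrt (2 * L) \<le> T" unfolding T_def using a0 C0 L by (simp add: field_simps)
  hence "step1_threshold X j kappa1 \<le> (1 + kappa1) * T"
    using step1_threshold_le[OF _ _ lam] k1 unfolding L_def by simp
  moreover have "e \<le> step1_threshold X j kappa1" using star unfolding step1_eta_star_def by auto
  ultimately show "e \<le> (1 + kappa1) * sqrt ((4 * C0 / a0) * ln (real CARD('p)))"
    unfolding T_def L_def by simp
qed

end
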